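(* Let $P>0$, $\Delta>0$, $T\in\mathbb{N}$, and $H_1,H_2\ge 0$. Define the quantizer $q_r(x)=\lfloor x/\Delta\rfloor\Delta$ for $x\le T\Delta$ and $q_r(x)=T\Delta$ for $x>T\Delta$, and set $a_i=q_r(H_i)$. Suppose $a_1\ge a_2$. Let $$\alpha_{q_r}=\frac{2a_2}{\sqrt{(a_1+a_2)^2+4a_1a_2^2P}+(a_1+a_2)}\ \text{ if } a_1>0,\ a_2>0,\qquad \alpha_{q_r}=0 \text{ otherwise},$$ and $$r_{1,q_r}=\log_2(1+P\alpha_{q_r}a_1),\qquad r_{2,q_r}=\log_2\Big(1+\frac{P a_2(1-\alpha_{q_r})}{P a_2\alpha_{q_r}+1}\Big).$$ Then the rates $r_{1,q_r}$ and $r_{2,q_r}$ are achievable, i.e. $$r_{2,q_r}\le \log_2\Big(1+\frac{PH_2(1-\alpha_{q_r})}{PH_2\alpha_{q_r}+1}\Big),\quad r_{2,q_r}\le \log_2\Big(1+\frac{PH_1(1-\alpha_{q_r})}{PH_1\alpha_{q_r}+1}\Big),\quad r_{1,q_r}\le\log_2(1+P\alpha_{q_r}H_1).$$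
   Context: Two-user downlink NOMA with total power $P$, unit noise variance, true channel gains $H_1,H_2$. The base station gives power fraction $\alpha$ to $s_1$ (Receiver 1, treated as the stronger receiver since $q_r(H_1)\ge q_r(H_2)$) and $1-\alpha$ to $s_2$. Achievability means that each transmitted rate is at most the corresponding capacity under successive interference cancellation: Receiver 2 decodes $s_2$ treating $s_1$ as noise (first bound); Receiver 1 first decodes $s_2$ treating $s_1$ as noise (second bound), removes it, and then decodes $s_1$ interference-free (third bound). *)

theory Defs
  imports Complex_Main
begin

definition qr :: "real \<Rightarrow> nat \<Rightarrow> real \<Rightarrow> real" where
  "qr \<Delta> T x = (if x \<le> real T * \<Delta> then real_of_int \<lfloor>x / \<Delta>\<rfloor> * \<Delta> else real T * \<Delta>)"

definition alpha_q :: "real \<Rightarrow> real \<Rightarrow> real \<Rightarrow> real" where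
  "alpha_q P a1 a2 = (if a1 > 0 \<and> a2 > 0
     then 2 * a2 / (sqrt ((a1 + a2)^2 + 4 * a1 * a2^2 * P) + (a1 + a2)) else 0)"

definition rate1 :: "real \<Rightarrow> real \<Rightarrow> real \<Rightarrow> real" where
  "rate1 P \<alpha> h = log 2 (1 + P * \<alpha> * h)"

definition rate2 :: "real \<Rightarrow> real \<Rightarrow> real \<Rightarrow> real" where
  "rate2 P \<alpha> h = log 2 (1 + P * h * (1 - \<alpha>) / (P * h * \<alpha> + 1))"

end

theory Submission
  imports Defs
begin

text \<open>Quantization only rounds channel gains down, never below zero, and both rates are
  increasing in the gain as long as the power split \<open>\<alpha>\<close> lies in [0, 1]. Hence each rate
  computed from the quantized gains is dominated by the same rate evaluated at the true gains;
  for the second bound at Receiver 1 one additionally uses \<open>q_r(H\<^sub>2) \<le> q_r(H\<^sub>1) \<le> H\<^sub>1\<close>.\<close>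

lemma qr_nonneg_le:
  assumes "\<Delta> > 0" "x \<ge> 0"
  shows "0 \<le> qr \<Delta> T x \<and> qr \<Delta> T x \<le> x"
proof (cases "x \<le> real T * \<Delta>")
  case True
  have "real_of_int \<lfloor>x / \<Delta>\<rfloor> * \<Delta> \<le> x / \<Delta> * \<Delta>"
    using assms by (intro mult_right_mono) auto
  then show ?thesis using True assms by (simp add: qr_def)
next
  case False
  then show ?thesis using assms by (simp add: qr_def)
qed

lemma alpha_q_bounds:
  assumes "P > 0" "0 \<le> a2" "a2 \<le> a1"
  shows "0 \<le> alpha_q P a1 a2 \<and> alpha_q P a1 a2 \<le> 1"
proof (cases "a1 > 0 \<and> a2 > 0")
  case True
  define s where "s = sqrt ((a1 + a2)^2 + 4 * a1 * a2^2 * P)"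
  have "0 \<le> s" unfolding s_def using True assms by simp
  then have "2 * a2 \<le> s + (a1 + a2)" and "0 < s + (a1 + a2)"
    using assms True by linarith+
  then show ?thesis using True by (simp add: alpha_q_def s_def divide_le_eq_1)
next
  case False
  then show ?thesis unfolding alpha_q_def by (simp only: if_False order_refl zero_le_one)
qed

lemma rate1_mono:
  assumes "P > 0" "0 \<le> \<alpha>" "0 \<le> x" "x \<le> y"
  shows "rate1 P \<alpha> x \<le> rate1 P \<alpha> y"
proof -
  have "P * \<alpha> * x \<le> P * \<alpha> * y" using assms by (intro mult_left_mono) auto
  moreover have "0 \<le> P * \<alpha> * x" using assms by simp
  ultimately show ?thesis unfolding rate1_def by (simp add: log_le_cancel_iff)
qed

lemma frac_affine_mono:
  fixes c x y :: real
  assumes "0 \<le> c" "0 \<le> x" "x \<le> y"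
  shows "x / (c * x + 1) \<le> y / (c * y + 1)"
proof -
  have "0 < c * x + 1" "0 < c * y + 1" using assms by (auto intro: add_nonneg_pos)
  moreover have "x * (c * y + 1) \<le> y * (c * x + 1)" using assms by (simp add: algebra_simps)
  ultimately show ?thesis by (simp add: divide_simps)
qed

lemma rate2_mono:
  assumes "P > 0" "0 \<le> \<alpha>" "\<alpha> \<le> 1" "0 \<le> x" "x \<le> y"
  shows "rate2 P \<alpha> x \<le> rate2 P \<alpha> y"
proof -
  define sinr where "sinr z = (1 - \<alpha>) * (P * z / (\<alpha> * (P * z) + 1))" for z
  have rate2_sinr: "rate2 P \<alpha> z = log 2 (1 + sinr z)" for z
    by (simp add: rate2_def sinr_def algebra_simps)
  have "sinr x \<le> sinr y"
    unfolding sinr_def using assms by (intro mult_left_mono frac_affine_mono) auto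
  moreover have "0 \<le> sinr x" unfolding sinr_def using assms by simp
  ultimately show ?thesis unfolding rate2_sinr by (simp add: log_le_cancel_iff)
qed

theorem lemma1:
  fixes P \<Delta> H1 H2 :: real and T :: nat
  assumes "P > 0" and "\<Delta> > 0" and "H1 \<ge> 0" and "H2 \<ge> 0"
    and "qr \<Delta> T H1 \<ge> qr \<Delta> T H2"
  shows "let a1 = qr \<Delta> T H1; a2 = qr \<Delta> T H2; \<alpha> = alpha_q P a1 a2;
             r1 = rate1 P \<alpha> a1; r2 = rate2 P \<alpha> a2
         in r2 \<le> rate2 P \<alpha> H2 \<and> r2 \<le> rate2 P \<alpha> H1 \<and> r1 \<le> rate1 P \<alpha> H1"
proof -
  define a1 where "a1 = qr \<Delta> T H1"
  define a2 where "a2 = qr \<Delta> T H2"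
  define \<alpha> where "\<alpha> = alpha_q P a1 a2"
  have a1: "0 \<le> a1" "a1 \<le> H1" unfolding a1_def using qr_nonneg_le assms by blast+
  have a2: "0 \<le> a2" "a2 \<le> H2" unfolding a2_def using qr_nonneg_le assms by blast+
  have "a2 \<le> a1" using assms(5) by (simp add: a1_def a2_def)
  then have \<alpha>: "0 \<le> \<alpha>" "\<alpha> \<le> 1" unfolding \<alpha>_def using alpha_q_bounds assms(1) a2 by blast+
  have "rate2 P \<alpha> a2 \<le> rate2 P \<alpha> H2" using rate2_mono assms(1) \<alpha> a2 by blast
  moreover have "rate2 P \<alpha> a2 \<le> rate2 P \<alpha> H1"
    using rate2_mono assms(1) \<alpha> a2(1) \<open>a2 \<le> a1\<close> a1(2) by (meson order_trans)
  moreover have "rate1 P \<alpha> a1 \<le> rate1 P \<alpha> H1" using rate1_mono assms(1) \<alpha> a1 by blast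
  ultimately show ?thesis unfolding a1_def a2_def \<alpha>_def Let_def by blast
qed

end
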